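(* In the setting below, the map $\bar D\mapsto s_\mathrm{eq}(\bar s,\bar D)$ is differentiable for $\bar D\in(D_{\min},D_{\max})$, it satisfies $\mu(s_\mathrm{eq})=\bar D-G_1(s_\mathrm{eq}-\bar s)$, and $$\frac{\partial s_\mathrm{eq}}{\partial\bar D}(\bar s,\bar D)=\frac{1}{G_1+\mu'(s_\mathrm{eq}(\bar s,\bar D))}.$$ Setting: $s_\mathrm{in}>0$, $0<s_{\min}<s_\mathrm{in}$, $0<D_{\min}<D_{\max}$, $G_1>0$, $\bar s\in[s_{\min},s_\mathrm{in})$; $\mu:[0,s_\mathrm{in}]\to[0,\infty)$ is continuously differentiable with $\mu(0)=0$, $\mu(s)>0$ for $s>0$, $D_{\min}<\mu(s)$ for all $s\in[s_{\min},s_\mathrm{in}]$, $D_{\max}>\mu(s)$ for all $s\in[0,s_\mathrm{in}]$; $G_1>-\min_{[0,s_\mathrm{in}]}\mu'$ and $G_1>-(\mu(s_\mathrm{in})-\bar D)/(s_\mathrm{in}-\bar s)$ for all considered $\bar D$.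
   Context: $s_\mathrm{eq}(\bar s,\bar D)=\lim_{t\to\infty}s(t)$, where $(s,b)$ solves $\dot s=-\mu(s)b+D(s_\mathrm{in}-s)$, $\dot b=\mu(s)b-Db$ with $D=\operatorname{sat}_{[D_{\min},D_{\max}]}(\bar D-G_1(s-\bar s))$ from any initial condition in $[0,s_\mathrm{in})\times(0,\infty)$. The saturation function is $\operatorname{sat}_{[D_{\min},D_{\max}]}(x)=D_{\max}$ if $x>D_{\max}$, $=x$ if $x\in[D_{\min},D_{\max}]$, $=D_{\min}$ if $x<D_{\min}$. *)

theory Defs
  imports "HOL-Analysis.Analysis"
begin

definition sat :: "real \<Rightarrow> real \<Rightarrow> real \<Rightarrow> real" where
  "sat Dmin Dmax x = (if x > Dmax then Dmax else if x < Dmin then Dmin else x)"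

definition dil :: "real \<Rightarrow> real \<Rightarrow> real \<Rightarrow> real \<Rightarrow> real \<Rightarrow> real \<Rightarrow> real" where
  "dil Dmin Dmax G1 sbar Dbar s = sat Dmin Dmax (Dbar - G1 * (s - sbar))"

definition closed_loop_sol ::
  "real \<Rightarrow> (real \<Rightarrow> real) \<Rightarrow> real \<Rightarrow> real \<Rightarrow> real \<Rightarrow> real \<Rightarrow> real
   \<Rightarrow> (real \<Rightarrow> real) \<Rightarrow> (real \<Rightarrow> real) \<Rightarrow> bool" where
  "closed_loop_sol s_in mu Dmin Dmax G1 sbar Dbar s b \<longleftrightarrow>
     s 0 \<in> {0..<s_in} \<and> b 0 > 0 \<and>
     (\<forall>t\<ge>0. (s has_real_derivative
                 (- mu (s t) * b t + dil Dmin Dmax G1 sbar Dbar (s t) * (s_in - s t))) (at t within {0..})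
            \<and> (b has_real_derivative
                 (mu (s t) * b t - dil Dmin Dmax G1 sbar Dbar (s t) * b t)) (at t within {0..}))"

definition s_eq ::
  "real \<Rightarrow> (real \<Rightarrow> real) \<Rightarrow> real \<Rightarrow> real \<Rightarrow> real \<Rightarrow> real \<Rightarrow> real \<Rightarrow> real" where
  "s_eq s_in mu Dmin Dmax G1 sbar Dbar =
     (THE L. \<forall>s b. closed_loop_sol s_in mu Dmin Dmax G1 sbar Dbar s b \<longrightarrow> (s \<longlongrightarrow> L) at_top)"

end

theory Submission
  imports Defs "HOL-Real_Asymp.Real_Asymp" "HOL-Complex_Analysis.Conformal_Mappings"
begin

text \<open>For fixed \<open>Dbar\<close> the closed loop is a chemostat whose dilution rate
  \<open>D(s) = sat(Dbar - G1 (s - sbar))\<close> exceeds \<open>\<mu>(s)\<close> below and falls short of it above a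
  single point \<open>r \<in> (0, s_in)\<close>, the root of \<open>\<mu>(s) + G1 s = Dbar + G1 sbar\<close>; the
  conditions on \<open>G1\<close> make \<open>s \<mapsto> \<mu>(s) + G1 s\<close> strictly increasing and place the root inside
  \<open>(0, s_in)\<close>. Along every solution the excess \<open>z = s + b - s_in\<close> obeys \<open>z' = -D(s) z\<close> and decays
  exponentially, after which barrier arguments trap \<open>s\<close> in any neighbourhood of \<open>r\<close>; the
  constant solution at \<open>r\<close> shows that \<open>r\<close> is the only common limit. Hence \<open>s_eq\<close> is the
  inverse of \<open>s \<mapsto> \<mu>(s) + G1 (s - sbar)\<close>, and the inverse function theorem gives the
  derivative \<open>1 / (G1 + \<mu>'(s_eq))\<close>.\<close>

lemma continuous_induct_real:
  fixes P :: "real \<Rightarrow> bool"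
  assumes start: "P c"
    and right: "\<And>t. c \<le> t \<Longrightarrow> P t \<Longrightarrow> eventually P (at_right t)"
    and left: "\<And>t. c < t \<Longrightarrow> (\<And>u. c \<le> u \<Longrightarrow> u < t \<Longrightarrow> P u) \<Longrightarrow> P t"
    and "c \<le> t"
  shows "P t"
proof (rule ccontr)
  assume "\<not> P t"
  define S where "S = {u. c \<le> u \<and> \<not> P u}"
  have "t \<in> S" using \<open>c \<le> t\<close> \<open>\<not> P t\<close> by (simp add: S_def)
  have bdd: "bdd_below S" by (rule bdd_belowI[of _ c]) (simp add: S_def)
  define i where "i = Inf S"
  have i_le: "i \<le> u" if "u \<in> S" for u unfolding i_def using that bdd by (rule cInf_lower)
  have "c \<le> i" unfolding i_def using \<open>t \<in> S\<close> by (intro cInf_greatest) (auto simp: S_def)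
  have "P i"
  proof (cases "c = i")
    case False
    then have "c < i" using \<open>c \<le> i\<close> by simp
    then show ?thesis using left i_le by (force simp: S_def)
  qed (use start in simp)
  then obtain e where "i < e" and P_right: "\<And>y. i < y \<Longrightarrow> y < e \<Longrightarrow> P y"
    using right[OF \<open>c \<le> i\<close>] by (auto simp: eventually_at_right_field)
  have "e \<le> i" unfolding i_def
  proof (rule cInf_greatest)
    show "S \<noteq> {}" using \<open>t \<in> S\<close> by blast
  next
    fix u assume "u \<in> S"
    then show "e \<le> u" using i_le[of u] \<open>P i\<close> P_right[of u] by (cases "u = i") (auto simp: S_def intro: leI)
  qed
  with \<open>i < e\<close> show False by simp
qed

lemma stays_less_by_barrier:
  fixes f f' :: "real \<Rightarrow> real"
  assumes cont: "continuous_on {c..} f"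
    and deriv: "\<And>t. c < t \<Longrightarrow> (f has_real_derivative f' t) (at t)"
    and start: "f c < a"
    and crossing: "\<And>t. c < t \<Longrightarrow> f t = a \<Longrightarrow> f' t < 0"
    and "c \<le> t"
  shows "f t < a"
  using start _ _ \<open>c \<le> t\<close>
proof (rule continuous_induct_real)
  fix t assume "c \<le> t" "f t < a"
  have "(f \<longlongrightarrow> f t) (at_right t)"
    using cont \<open>c \<le> t\<close> by (auto simp: continuous_on_def intro: tendsto_within_subset)
  then show "eventually (\<lambda>u. f u < a) (at_right t)" using \<open>f t < a\<close> by (rule order_tendstoD)
next
  fix t assume "c < t" and below: "\<And>u. c \<le> u \<Longrightarrow> u < t \<Longrightarrow> f u < a"
  have "(f \<longlongrightarrow> f t) (at_left t)"
    using DERIV_isCont[OF deriv[OF \<open>c < t\<close>]] by (simp add: isCont_def filterlim_at_split)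
  moreover have "eventually (\<lambda>u. f u \<le> a) (at_left t)"
    unfolding eventually_at_left_field using \<open>c < t\<close> below by (auto intro!: exI[of _ c] less_imp_le)
  ultimately have "f t \<le> a" by (rule tendsto_upperbound) simp
  show "f t < a"
  proof (rule ccontr)
    assume "\<not> f t < a"
    then have "f t = a" using \<open>f t \<le> a\<close> by simp
    then obtain d where "d > 0" and dec: "\<And>h. 0 < h \<Longrightarrow> h < d \<Longrightarrow> f t < f (t - h)"
      using DERIV_neg_dec_left[OF deriv crossing] \<open>c < t\<close> by blast
    obtain h where "0 < h" "h < d" "h < t - c"
      using field_lbound_gt_zero[of d "t - c"] \<open>d > 0\<close> \<open>c < t\<close> by auto
    then have "f t < f (t - h)" "f (t - h) < a" using dec below by auto
    with \<open>f t = a\<close> show False by simp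
  qed
qed

lemma eventually_less_by_barrier:
  fixes f f' :: "real \<Rightarrow> real"
  assumes deriv: "\<And>t. T < t \<Longrightarrow> (f has_real_derivative f' t) (at t)"
    and crossing: "eventually (\<lambda>t. f t = a \<longrightarrow> f' t < 0) at_top"
    and "frequently (\<lambda>t. f t < a) at_top"
  shows "eventually (\<lambda>t. f t < a) at_top"
proof -
  have "eventually (\<lambda>t. T < t \<and> (f t = a \<longrightarrow> f' t < 0)) at_top"
    using eventually_gt_at_top[of T] crossing by (rule eventually_conj)
  then obtain T1 where T1: "\<And>t. T1 \<le> t \<Longrightarrow> T < t \<and> (f t = a \<longrightarrow> f' t < 0)"
    by (auto simp: eventually_at_top_linorder)
  obtain t1 where t1: "f t1 < a \<and> T1 \<le> t1"
    using frequently_eventually_frequently[OF \<open>frequently _ _\<close> eventually_ge_at_top[of T1]]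
    by (rule frequentlyE)
  have deriv_t1: "(f has_real_derivative f' t) (at t)" if "t1 \<le> t" for t
    using deriv[of t] T1[of t1] t1 that by simp
  have "f t < a" if "t1 \<le> t" for t
  proof (rule stays_less_by_barrier[where f = f and f' = f' and c = t1])
    show "continuous_on {t1..} f"
      using DERIV_isCont[OF deriv_t1] by (auto intro!: continuous_at_imp_continuous_on)
    show "f' t < 0" if "t1 < t" "f t = a" for t
      using T1[of t] that t1 by simp
  qed (use deriv_t1 t1 \<open>t1 \<le> t\<close> in auto)
  then show ?thesis unfolding eventually_at_top_linorder by blast
qed

lemma eventually_greater_by_barrier:
  fixes f f' :: "real \<Rightarrow> real"
  assumes "\<And>t. T < t \<Longrightarrow> (f has_real_derivative f' t) (at t)"
    and "eventually (\<lambda>t. f t = a \<longrightarrow> 0 < f' t) at_top"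
    and "frequently (\<lambda>t. a < f t) at_top"
  shows "eventually (\<lambda>t. a < f t) at_top"
proof -
  have "eventually (\<lambda>t. - f t < - a) at_top"
  proof (rule eventually_less_by_barrier[where f' = "\<lambda>t. - f' t" and T = T])
    show "((\<lambda>t. - f t) has_real_derivative - f' t) (at t)" if "T < t" for t
      using assms(1)[OF that] by (rule derivative_intros)
    show "eventually (\<lambda>t. - f t = - a \<longrightarrow> - f' t < 0) at_top"
      using assms(2) by (rule eventually_mono) simp
    show "frequently (\<lambda>t. - f t < - a) at_top"
      using assms(3) by (rule frequently_elim1) simp
  qed
  then show ?thesis by (rule eventually_mono) simp
qed

lemma filterlim_at_top_by_deriv_ge:
  fixes f f' :: "real \<Rightarrow> real"
  assumes deriv: "\<And>t. T < t \<Longrightarrow> (f has_real_derivative f' t) (at t)"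
    and "0 < k" and "eventually (\<lambda>t. k \<le> f' t) at_top"
  shows "filterlim f at_top at_top"
proof -
  have "eventually (\<lambda>t. T < t \<and> k \<le> f' t) at_top"
    using eventually_gt_at_top[of T] \<open>eventually _ _\<close> by (rule eventually_conj)
  then obtain T1 where T1: "\<And>t. T1 \<le> t \<Longrightarrow> T < t \<and> k \<le> f' t"
    by (auto simp: eventually_at_top_linorder)
  have growth: "f T1 + k * (t - T1) \<le> f t" if "T1 \<le> t" for t
  proof -
    have "(\<lambda>t. f t - k * t) T1 \<le> (\<lambda>t. f t - k * t) t"
    proof (rule DERIV_nonneg_imp_increasing_open[OF that])
      fix x assume "T1 < x" "x < t"
      then show "\<exists>y. ((\<lambda>t. f t - k * t) has_real_derivative y) (at x) \<and> 0 \<le> y"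
        using deriv[of x] T1[of x] by (intro exI[of _ "f' x - k"]) (auto intro!: derivative_eq_intros)
    next
      have "continuous_on {T1..t} f"
        using DERIV_isCont[OF deriv] T1 by (force intro!: continuous_at_imp_continuous_on)
      then show "continuous_on {T1..t} (\<lambda>t. f t - k * t)" by (intro continuous_intros)
    qed
    then show ?thesis by (simp add: algebra_simps)
  qed
  have "filterlim (\<lambda>t. f T1 + k * (t - T1)) at_top at_top"
    using \<open>0 < k\<close> by real_asymp
  moreover have "eventually (\<lambda>t. f T1 + k * (t - T1) \<le> f t) at_top"
    using eventually_ge_at_top[of T1] by (rule eventually_mono) (rule growth)
  ultimately show ?thesis by (rule filterlim_at_top_mono)
qed

lemma eventually_at_right_ge_by_deriv:
  fixes f :: "real \<Rightarrow> real"
  assumes deriv: "(f has_real_derivative f') (at t within {c..})" and "c \<le> t"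
    and "a \<le> f t" and pos: "f t = a \<Longrightarrow> 0 < f'"
  shows "eventually (\<lambda>u. a \<le> f u) (at_right t)"
proof (cases "f t = a")
  case True
  then obtain d where "0 < d" and inc: "\<forall>h>0. t + h \<in> {c..} \<longrightarrow> h < d \<longrightarrow> f t < f (t + h)"
    using has_real_derivative_pos_inc_right[OF deriv pos] by blast
  show ?thesis unfolding eventually_at_right_field
  proof (intro exI conjI allI impI)
    show "t < t + d" using \<open>0 < d\<close> by simp
    fix y assume "t < y" "y < t + d"
    then have "f t < f (t + (y - t))" using inc[rule_format, of "y - t"] \<open>c \<le> t\<close> by auto
    then show "a \<le> f y" using True by simp
  qed
next
  case False
  have "(f \<longlongrightarrow> f t) (at_right t)"
    using DERIV_continuous[OF deriv] \<open>c \<le> t\<close> by (auto simp: continuous_within intro: tendsto_within_subset)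
  then have "eventually (\<lambda>u. a < f u) (at_right t)"
    using False \<open>a \<le> f t\<close> by (intro order_tendstoD(1)) auto
  then show ?thesis by (rule eventually_mono) simp
qed

lemma compact_pos_lower_bound:
  fixes g :: "'a::topological_space \<Rightarrow> real"
  assumes "compact K" "K \<noteq> {}" "continuous_on K g" "\<And>x. x \<in> K \<Longrightarrow> 0 < g x"
  shows "\<exists>m>0. \<forall>x\<in>K. m \<le> g x"
proof -
  obtain x where "x \<in> K" "\<forall>y\<in>K. g x \<le> g y" using continuous_attains_inf[OF assms(1-3)] by blast
  then show ?thesis using assms(4)[OF \<open>x \<in> K\<close>] by blast
qed

lemma has_real_derivative_at_if_within_atLeast:
  assumes "(f has_real_derivative D) (at t within {c..})" and "c < t"
  shows "(f has_real_derivative D) (at t)"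
proof -
  have "at t within {c..} = at t" using \<open>c < t\<close> by (intro at_within_interior) simp
  with assms(1) show ?thesis by simp
qed

locale chemostat_trajectory =
  fixes s_in Dmin Dmax sstar :: real and mu Df s b :: "real \<Rightarrow> real"
  assumes Dmin_pos: "0 < Dmin"
    and mu_cont: "continuous_on {0..s_in} mu"
    and mu_0: "mu 0 = 0"
    and mu_nonneg: "\<And>x. x \<in> {0..s_in} \<Longrightarrow> 0 \<le> mu x"
    and Df_cont: "continuous_on {0..s_in} Df"
    and Df_ge: "\<And>x. Dmin \<le> Df x" and Df_le: "\<And>x. Df x \<le> Dmax"
    and sstar: "0 < sstar" "sstar < s_in"
    and mu_less_Df: "\<And>x. 0 \<le> x \<Longrightarrow> x < sstar \<Longrightarrow> mu x < Df x"
    and Df_less_mu: "\<And>x. sstar < x \<Longrightarrow> x \<le> s_in \<Longrightarrow> Df x < mu x"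
    and s_0: "s 0 \<in> {0..s_in}" and b_0: "0 < b 0"
    and s_deriv: "\<And>t. 0 \<le> t \<Longrightarrow>
      (s has_real_derivative - mu (s t) * b t + Df (s t) * (s_in - s t)) (at t within {0..})"
    and b_deriv: "\<And>t. 0 \<le> t \<Longrightarrow>
      (b has_real_derivative mu (s t) * b t - Df (s t) * b t) (at t within {0..})"
begin

abbreviation s_rate :: "real \<Rightarrow> real" where
  "s_rate t \<equiv> - mu (s t) * b t + Df (s t) * (s_in - s t)"

abbreviation total_excess :: "real \<Rightarrow> real" where
  "total_excess t \<equiv> s t + b t - s_in"

lemma s_deriv_at: "0 < t \<Longrightarrow> (s has_real_derivative s_rate t) (at t)"
  by (rule has_real_derivative_at_if_within_atLeast[OF s_deriv]) simp_all

lemma b_deriv_at: "0 < t \<Longrightarrow> (b has_real_derivative mu (s t) * b t - Df (s t) * b t) (at t)"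
  by (rule has_real_derivative_at_if_within_atLeast[OF b_deriv]) simp_all

lemma s_continuous: "continuous_on {0..} s"
  by (rule DERIV_continuous_on) (rule s_deriv, simp)

lemma b_continuous: "continuous_on {0..} b"
  by (rule DERIV_continuous_on) (rule b_deriv, simp)

lemma mu_s_in_pos: "0 < mu s_in"
  using Df_less_mu[of s_in] Df_ge[of s_in] Dmin_pos sstar by simp

lemma b_lower_bound:
  assumes "0 \<le> t" and before: "\<And>u. 0 < u \<Longrightarrow> u < t \<Longrightarrow> s u \<in> {0..s_in} \<and> 0 \<le> b u"
  shows "b 0 * exp (- Dmax * t) \<le> b t"
proof -
  have "(\<lambda>u. b u * exp (Dmax * u)) 0 \<le> (\<lambda>u. b u * exp (Dmax * u)) t"
  proof (rule DERIV_nonneg_imp_increasing_open[OF \<open>0 \<le> t\<close>])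
    fix u assume "0 < u" "u < t"
    have "0 \<le> (mu (s u) - Df (s u) + Dmax) * b u * exp (Dmax * u)"
      using before[OF \<open>0 < u\<close> \<open>u < t\<close>] mu_nonneg[of "s u"] Df_le[of "s u"] by simp
    moreover have "((\<lambda>u. b u * exp (Dmax * u)) has_real_derivative
        (mu (s u) - Df (s u) + Dmax) * b u * exp (Dmax * u)) (at u)"
      using b_deriv_at[OF \<open>0 < u\<close>] by (auto intro!: derivative_eq_intros simp: algebra_simps)
    ultimately show "\<exists>y. ((\<lambda>u. b u * exp (Dmax * u)) has_real_derivative y) (at u) \<and> 0 \<le> y"
      by blast
  next
    show "continuous_on {0..t} (\<lambda>u. b u * exp (Dmax * u))"
      by (intro continuous_intros continuous_on_subset[OF b_continuous]) auto
  qed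
  then have "b 0 * exp (- Dmax * t) \<le> b t * exp (Dmax * t) * exp (- Dmax * t)"
    by (simp add: mult_right_mono)
  then show ?thesis by (simp add: mult.assoc flip: exp_add)
qed

lemma invariant:
  assumes "0 \<le> t"
  shows "s t \<in> {0..s_in} \<and> 0 < b t"
  using _ _ _ assms
proof (rule continuous_induct_real)
  show "s 0 \<in> {0..s_in} \<and> 0 < b 0" using s_0 b_0 by simp
next
  fix t assume "0 \<le> t" and now: "s t \<in> {0..s_in} \<and> 0 < b t"
  have "(b \<longlongrightarrow> b t) (at t within {0..})" using b_continuous \<open>0 \<le> t\<close> by (simp add: continuous_on_def)
  then have "(b \<longlongrightarrow> b t) (at_right t)" by (rule tendsto_within_subset) (use \<open>0 \<le> t\<close> in auto)
  then have "eventually (\<lambda>u. 0 < b u) (at_right t)" using now by (intro order_tendstoD(1)) auto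
  moreover have "eventually (\<lambda>u. 0 \<le> s u) (at_right t)"
  proof (rule eventually_at_right_ge_by_deriv[OF s_deriv[OF \<open>0 \<le> t\<close>] \<open>0 \<le> t\<close>])
    show "0 \<le> s t" using now by simp
    show "s t = 0 \<Longrightarrow> 0 < s_rate t" using mu_0 Df_ge[of 0] Dmin_pos sstar by simp
  qed
  moreover have "eventually (\<lambda>u. - s_in \<le> - s u) (at_right t)"
  proof (rule eventually_at_right_ge_by_deriv[OF DERIV_minus[OF s_deriv[OF \<open>0 \<le> t\<close>]] \<open>0 \<le> t\<close>])
    show "- s_in \<le> - s t" using now by simp
    show "- s t = - s_in \<Longrightarrow> 0 < - s_rate t" using mu_s_in_pos now by simp
  qed
  ultimately show "eventually (\<lambda>u. s u \<in> {0..s_in} \<and> 0 < b u) (at_right t)"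
    by eventually_elim simp
next
  fix t assume "0 < t" and before: "\<And>u. 0 \<le> u \<Longrightarrow> u < t \<Longrightarrow> s u \<in> {0..s_in} \<and> 0 < b u"
  have lim: "(s \<longlongrightarrow> s t) (at_left t)"
    using DERIV_isCont[OF s_deriv_at[OF \<open>0 < t\<close>]] by (simp add: isCont_def filterlim_at_split)
  have ev: "eventually (\<lambda>u. 0 \<le> s u) (at_left t)" "eventually (\<lambda>u. s u \<le> s_in) (at_left t)"
    unfolding eventually_at_left_field using \<open>0 < t\<close> before by (auto intro!: exI[of _ 0])
  have "0 \<le> s t" by (rule tendsto_lowerbound[OF lim ev(1)]) simp
  moreover have "s t \<le> s_in" by (rule tendsto_upperbound[OF lim ev(2)]) simp
  moreover have "b 0 * exp (- Dmax * t) \<le> b t"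
  proof (rule b_lower_bound)
    fix u assume "0 < u" "u < t"
    then show "s u \<in> {0..s_in} \<and> 0 \<le> b u" using before[of u] by simp
  qed (use \<open>0 < t\<close> in simp)
  then have "0 < b t" using b_0 by (meson exp_gt_zero less_le_trans mult_pos_pos)
  ultimately show "s t \<in> {0..s_in} \<and> 0 < b t" by simp
qed

lemma s_nonneg: "0 \<le> t \<Longrightarrow> 0 \<le> s t"
  using invariant[of t] by simp

lemma s_le_s_in: "0 \<le> t \<Longrightarrow> s t \<le> s_in"
  using invariant[of t] by simp

lemma b_pos: "0 \<le> t \<Longrightarrow> 0 < b t"
  using invariant[of t] by simp

lemma total_excess_bound:
  assumes "0 \<le> t"
  shows "\<bar>total_excess t\<bar> \<le> \<bar>total_excess 0\<bar> * exp (- Dmin * t)"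
proof -
  have "(\<lambda>u. (total_excess u)\<^sup>2 * exp (2 * Dmin * u)) t \<le> (\<lambda>u. (total_excess u)\<^sup>2 * exp (2 * Dmin * u)) 0"
  proof (rule DERIV_nonpos_imp_decreasing_open[OF assms])
    fix u assume "0 < u" "u < t"
    have "((\<lambda>u. (total_excess u)\<^sup>2 * exp (2 * Dmin * u)) has_real_derivative
        2 * (total_excess u)\<^sup>2 * exp (2 * Dmin * u) * (Dmin - Df (s u))) (at u)"
      using s_deriv_at[OF \<open>0 < u\<close>] b_deriv_at[OF \<open>0 < u\<close>]
      by (auto intro!: derivative_eq_intros simp: algebra_simps power2_eq_square)
    moreover have "2 * (total_excess u)\<^sup>2 * exp (2 * Dmin * u) * (Dmin - Df (s u)) \<le> 0"
      using Df_ge[of "s u"] by (simp add: mult_nonneg_nonpos)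
    ultimately show "\<exists>y. ((\<lambda>u. (total_excess u)\<^sup>2 * exp (2 * Dmin * u)) has_real_derivative y) (at u)
        \<and> y \<le> 0"
      by blast
  next
    show "continuous_on {0..t} (\<lambda>u. (total_excess u)\<^sup>2 * exp (2 * Dmin * u))"
      by (intro continuous_intros continuous_on_subset[OF s_continuous]
          continuous_on_subset[OF b_continuous]) auto
  qed
  then have "(total_excess t)\<^sup>2 \<le> (total_excess 0)\<^sup>2 / exp (2 * Dmin * t)"
    by (simp add: pos_le_divide_eq)
  also have "\<dots> = (total_excess 0 * exp (- Dmin * t))\<^sup>2"
    by (simp add: power_mult_distrib power2_eq_square divide_inverse flip: exp_add exp_minus)
  finally show ?thesis by (simp add: abs_le_square_iff[symmetric] abs_mult)
qed

lemma total_excess_tendsto_0: "(total_excess \<longlongrightarrow> 0) at_top"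
proof (rule Lim_null_comparison)
  show "eventually (\<lambda>t. norm (total_excess t) \<le> \<bar>total_excess 0\<bar> * exp (- Dmin * t)) at_top"
    using eventually_ge_at_top[of 0] by (rule eventually_mono) (simp only: real_norm_def total_excess_bound)
  show "((\<lambda>t. \<bar>total_excess 0\<bar> * exp (- Dmin * t)) \<longlongrightarrow> 0) at_top"
    using Dmin_pos by real_asymp
qed

lemma mu_s_total_excess_tendsto_0: "((\<lambda>t. mu (s t) * total_excess t) \<longlongrightarrow> 0) at_top"
proof -
  have "bounded (mu ` {0..s_in})" by (intro compact_imp_bounded compact_continuous_image mu_cont) simp
  then obtain M where M: "\<forall>y\<in>mu ` {0..s_in}. norm y \<le> M" unfolding bounded_iff by blast
  show ?thesis
  proof (rule Lim_null_comparison)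
    show "eventually (\<lambda>t. norm (mu (s t) * total_excess t) \<le> M * \<bar>total_excess t\<bar>) at_top"
      using eventually_ge_at_top[of 0]
    proof (rule eventually_mono)
      fix t :: real assume "0 \<le> t"
      then have "\<bar>mu (s t)\<bar> \<le> M" using M invariant[of t] by simp
      then show "norm (mu (s t) * total_excess t) \<le> M * \<bar>total_excess t\<bar>"
        by (simp add: abs_mult mult_right_mono)
    qed
    show "((\<lambda>t. M * \<bar>total_excess t\<bar>) \<longlongrightarrow> 0) at_top"
      using tendsto_mult_right_zero[OF tendsto_rabs_zero[OF total_excess_tendsto_0]] by simp
  qed
qed

lemma s_rate_eq: "s_rate t = (Df (s t) - mu (s t)) * (s_in - s t) - mu (s t) * total_excess t"
  by (simp add: algebra_simps)

lemma ln_b_deriv_at: "0 < t \<Longrightarrow> ((\<lambda>t. ln (b t)) has_real_derivative mu (s t) - Df (s t)) (at t)"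
  using b_deriv_at[of t] b_pos[of t] by (auto intro!: derivative_eq_intros simp: field_simps)

lemma s_rate_push_below:
  assumes "0 \<le> a" "a < sstar"
  shows "\<exists>k>0. eventually (\<lambda>t. s t \<le> a \<longrightarrow> k < s_rate t) at_top"
proof -
  have "\<exists>m>0. \<forall>x\<in>{0..a}. m \<le> Df x - mu x"
  proof (rule compact_pos_lower_bound)
    show "continuous_on {0..a} (\<lambda>x. Df x - mu x)" using assms sstar
      by (intro continuous_intros continuous_on_subset[OF Df_cont] continuous_on_subset[OF mu_cont]) auto
    show "0 < Df x - mu x" if "x \<in> {0..a}" for x using mu_less_Df[of x] that assms by simp
  qed (use assms in auto)
  then obtain m where "0 < m" and m: "\<And>x. x \<in> {0..a} \<Longrightarrow> m \<le> Df x - mu x" by blast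
  define k where "k = m * (s_in - sstar) / 2"
  have "0 < k" using \<open>0 < m\<close> sstar by (simp add: k_def)
  have "eventually (\<lambda>t. s t \<le> a \<longrightarrow> k < s_rate t) at_top"
    using eventually_ge_at_top[of 0]
      order_tendstoD(2)[OF tendsto_rabs_zero[OF mu_s_total_excess_tendsto_0] \<open>0 < k\<close>]
  proof eventually_elim
    fix t assume "0 \<le> t" and small: "\<bar>mu (s t) * total_excess t\<bar> < k"
    show "s t \<le> a \<longrightarrow> k < s_rate t"
    proof
      assume "s t \<le> a"
      then have "s t \<in> {0..a}" using s_nonneg[OF \<open>0 \<le> t\<close>] by simp
      then have "m * (s_in - sstar) \<le> (Df (s t) - mu (s t)) * (s_in - s t)"
        using m[of "s t"] \<open>0 < m\<close> assms sstar by (intro mult_mono) auto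
      then show "k < s_rate t" using small unfolding s_rate_eq k_def by (simp add: abs_less_iff)
    qed
  qed
  with \<open>0 < k\<close> show ?thesis by blast
qed

lemma eventually_greater_below_sstar:
  assumes "a < sstar"
  shows "eventually (\<lambda>t. a < s t) at_top"
proof -
  define a' where "a' = max 0 a"
  have "0 \<le> a'" "a' < sstar" "a \<le> a'" using assms sstar by (auto simp: a'_def)
  then obtain k where "0 < k" and push: "eventually (\<lambda>t. s t \<le> a' \<longrightarrow> k < s_rate t) at_top"
    using s_rate_push_below by blast
  have freq: "frequently (\<lambda>t. a' < s t) at_top"
  proof (rule ccontr)
    assume "\<not> frequently (\<lambda>t. a' < s t) at_top"
    then have "eventually (\<lambda>t. s t \<le> a') at_top" by (simp add: not_frequently not_less)
    with push have fast: "eventually (\<lambda>t. k \<le> s_rate t) at_top" by eventually_elim simp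
    have "filterlim s at_top at_top"
      by (rule filterlim_at_top_by_deriv_ge[where T = 0 and k = k, OF s_deriv_at])
         (use \<open>0 < k\<close> fast in simp_all)
    then have "eventually (\<lambda>t. s_in + 1 \<le> s t) at_top" by (simp add: filterlim_at_top)
    moreover have "eventually (\<lambda>t. s t \<le> s_in) at_top"
      using eventually_ge_at_top[of 0] by (rule eventually_mono) (rule s_le_s_in)
    ultimately have "eventually (\<lambda>t. s_in + 1 \<le> s t \<and> s t \<le> s_in) at_top"
      by (rule eventually_conj)
    then have "eventually (\<lambda>t::real. False) at_top" by (rule eventually_mono) linarith
    then show False by simp
  qed
  have crossing: "eventually (\<lambda>t. s t = a' \<longrightarrow> 0 < s_rate t) at_top"
    using push by eventually_elim (use \<open>0 < k\<close> in auto)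
  have "eventually (\<lambda>t. a' < s t) at_top"
    by (rule eventually_greater_by_barrier[where T = 0, OF s_deriv_at]) (use crossing freq in simp_all)
  then show ?thesis by (rule eventually_mono) (use \<open>a \<le> a'\<close> in simp)
qed

lemma s_rate_neg_at_level:
  assumes "sstar < a" "a < s_in"
  shows "eventually (\<lambda>t. s t = a \<longrightarrow> s_rate t < 0) at_top"
proof -
  define k where "k = (mu a - Df a) * (s_in - a)"
  have "0 < k" using Df_less_mu[of a] assms by (simp add: k_def)
  show ?thesis
    using order_tendstoD(2)[OF tendsto_rabs_zero[OF mu_s_total_excess_tendsto_0] \<open>0 < k\<close>]
  proof eventually_elim
    fix t assume small: "\<bar>mu (s t) * total_excess t\<bar> < k"
    show "s t = a \<longrightarrow> s_rate t < 0"
    proof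
      assume "s t = a"
      moreover have "(Df a - mu a) * (s_in - a) = - k" by (simp add: k_def algebra_simps)
      ultimately show "s_rate t < 0" using small unfolding s_rate_eq by (simp add: abs_less_iff)
    qed
  qed
qed

lemma eventually_b_le: "eventually (\<lambda>t. b t \<le> s_in + 1) at_top"
  using eventually_ge_at_top[of 0]
    order_tendstoD(2)[OF tendsto_rabs_zero[OF total_excess_tendsto_0] zero_less_one]
proof eventually_elim
  fix t :: real assume "0 \<le> t" "\<bar>total_excess t\<bar> < 1"
  then show "b t \<le> s_in + 1" using s_nonneg[of t] by (simp add: abs_less_iff)
qed

text \<open>Above \<open>sstar\<close> the rate of \<open>s\<close> has no uniform sign near \<open>s_in\<close>, so the argument runs
  through \<open>b\<close>: staying above \<open>a\<close> would give \<open>(ln b)' \<ge> m > 0\<close>, whereas \<open>s + b \<rightarrow> s_in\<close>.\<close>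

lemma frequently_less_above_sstar:
  assumes "sstar < a" "a \<le> s_in"
  shows "frequently (\<lambda>t. s t < a) at_top"
proof (rule ccontr)
  assume "\<not> frequently (\<lambda>t. s t < a) at_top"
  then have above: "eventually (\<lambda>t. a \<le> s t) at_top" by (simp add: not_frequently not_less)
  have "\<exists>m>0. \<forall>x\<in>{a..s_in}. m \<le> mu x - Df x"
  proof (rule compact_pos_lower_bound)
    show "continuous_on {a..s_in} (\<lambda>x. mu x - Df x)" using assms sstar
      by (intro continuous_intros continuous_on_subset[OF Df_cont] continuous_on_subset[OF mu_cont]) auto
    show "0 < mu x - Df x" if "x \<in> {a..s_in}" for x using Df_less_mu[of x] that assms by simp
  qed (use assms in auto)
  then obtain m where "0 < m" and m: "\<And>x. x \<in> {a..s_in} \<Longrightarrow> m \<le> mu x - Df x" by blast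
  have "eventually (\<lambda>t. m \<le> mu (s t) - Df (s t)) at_top"
    using above eventually_ge_at_top[of 0]
  proof eventually_elim
    fix t :: real assume "a \<le> s t" "0 \<le> t"
    then show "m \<le> mu (s t) - Df (s t)" using m[of "s t"] s_le_s_in[of t] by simp
  qed
  then have "filterlim (\<lambda>t. ln (b t)) at_top at_top"
    by (intro filterlim_at_top_by_deriv_ge[where T = 0 and k = m, OF ln_b_deriv_at])
       (use \<open>0 < m\<close> in simp_all)
  then have "eventually (\<lambda>t. ln (s_in + 1) + 1 \<le> ln (b t)) at_top" by (simp add: filterlim_at_top)
  moreover have "eventually (\<lambda>t. 0 < b t) at_top"
    using eventually_ge_at_top[of 0] by (rule eventually_mono) (rule b_pos)
  ultimately have "eventually (\<lambda>t. ln (s_in + 1) + 1 \<le> ln (b t) \<and> b t \<le> s_in + 1 \<and> 0 < b t) at_top"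
    using eventually_b_le by (intro eventually_conj)
  then have "eventually (\<lambda>t::real. False) at_top"
  proof (rule eventually_mono)
    fix t assume t: "ln (s_in + 1) + 1 \<le> ln (b t) \<and> b t \<le> s_in + 1 \<and> 0 < b t"
    then have "ln (b t) \<le> ln (s_in + 1)" using sstar by simp
    with t show False by simp
  qed
  then show False by simp
qed

lemma eventually_less_above_sstar:
  assumes "sstar < a"
  shows "eventually (\<lambda>t. s t < a) at_top"
proof -
  define a' where "a' = min a ((sstar + s_in) / 2)"
  have "sstar < a'" "a' < s_in" "a' \<le> a"
    using assms sstar by (simp_all add: a'_def min_less_iff_disj)
  have crossing: "eventually (\<lambda>t. s t = a' \<longrightarrow> s_rate t < 0) at_top"
    using \<open>sstar < a'\<close> \<open>a' < s_in\<close> by (rule s_rate_neg_at_level)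
  have freq: "frequently (\<lambda>t. s t < a') at_top"
    using \<open>sstar < a'\<close> \<open>a' < s_in\<close> by (intro frequently_less_above_sstar) simp_all
  have "eventually (\<lambda>t. s t < a') at_top"
    by (rule eventually_less_by_barrier[where T = 0, OF s_deriv_at]) (use crossing freq in simp_all)
  then show ?thesis by (rule eventually_mono) (use \<open>a' \<le> a\<close> in simp)
qed

lemma s_tendsto_sstar: "(s \<longlongrightarrow> sstar) at_top"
  by (rule order_tendstoI[OF eventually_greater_below_sstar eventually_less_above_sstar])

end

lemma less_sat: "m < y \<Longrightarrow> m < Dmax \<Longrightarrow> m < sat Dmin Dmax y"
  by (simp add: sat_def)

lemma sat_less: "y < m \<Longrightarrow> Dmin < m \<Longrightarrow> sat Dmin Dmax y < m"
  by (simp add: sat_def)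

lemma sat_eq_self: "Dmin \<le> y \<Longrightarrow> y \<le> Dmax \<Longrightarrow> sat Dmin Dmax y = y"
  by (simp add: sat_def)

lemma sat_eq_max_min: "Dmin \<le> Dmax \<Longrightarrow> sat Dmin Dmax y = max Dmin (min Dmax y)"
  by (simp add: sat_def)

lemma s_eq_eqI:
  assumes "\<And>s b. closed_loop_sol s_in mu Dmin Dmax G1 sbar Dbar s b \<Longrightarrow> (s \<longlongrightarrow> r) at_top"
    and "closed_loop_sol s_in mu Dmin Dmax G1 sbar Dbar (\<lambda>_. r) (\<lambda>_. c)"
  shows "s_eq s_in mu Dmin Dmax G1 sbar Dbar = r"
  unfolding s_eq_def
proof (rule the_equality)
  show "\<forall>s b. closed_loop_sol s_in mu Dmin Dmax G1 sbar Dbar s b \<longrightarrow> (s \<longlongrightarrow> r) at_top"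
    using assms(1) by blast
next
  fix L assume "\<forall>s b. closed_loop_sol s_in mu Dmin Dmax G1 sbar Dbar s b \<longrightarrow> (s \<longlongrightarrow> L) at_top"
  then have "((\<lambda>_::real. r) \<longlongrightarrow> L) at_top" using assms(2) by blast
  then show "L = r" by (simp add: tendsto_const_iff)
qed

lemma closed_loop_sol_const:
  assumes "r \<in> {0..<s_in}" "mu r = dil Dmin Dmax G1 sbar Dbar r"
  shows "closed_loop_sol s_in mu Dmin Dmax G1 sbar Dbar (\<lambda>_. r) (\<lambda>_. s_in - r)"
  using assms unfolding closed_loop_sol_def by simp

locale feedback_chemostat =
  fixes s_in s_min Dmin Dmax G1 sbar :: real
    and mu mu' :: "real \<Rightarrow> real"
  assumes s_min_pos: "0 < s_min"
    and sbar: "sbar \<in> {s_min..<s_in}"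
    and Dmin_pos: "0 < Dmin" and Dmin_less_Dmax: "Dmin < Dmax"
    and G1_pos: "0 < G1"
    and mu_deriv: "\<And>s. s \<in> {0..s_in} \<Longrightarrow> (mu has_real_derivative mu' s) (at s within {0..s_in})"
    and mu_nonneg: "\<And>s. s \<in> {0..s_in} \<Longrightarrow> 0 \<le> mu s"
    and mu_0: "mu 0 = 0"
    and Dmin_less_mu: "\<And>s. s \<in> {s_min..s_in} \<Longrightarrow> Dmin < mu s"
    and mu_less_Dmax: "\<And>s. s \<in> {0..s_in} \<Longrightarrow> mu s < Dmax"
    and G1_gt_mu': "\<And>s. s \<in> {0..s_in} \<Longrightarrow> - mu' s < G1"
    and G1_gt_slope: "\<And>Dbar. Dbar \<in> {Dmin<..<Dmax} \<Longrightarrow> - (mu s_in - Dbar) / (s_in - sbar) < G1"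
begin

text \<open>The equilibrium equation \<open>\<mu>(s) = Dbar - G1 (s - sbar)\<close> reads \<open>balance s = Dbar + G1 sbar\<close>.\<close>

definition balance :: "real \<Rightarrow> real" where
  "balance x = mu x + G1 * x"

lemma mu_continuous: "continuous_on {0..s_in} mu"
  by (rule DERIV_continuous_on) (rule mu_deriv)

lemma balance_deriv_at:
  assumes "x \<in> {0<..<s_in}"
  shows "(balance has_real_derivative mu' x + G1) (at x)"
proof -
  have "at x within {0..s_in} = at x" using assms by (intro at_within_interior) simp
  then have "(mu has_real_derivative mu' x) (at x)" using mu_deriv[of x] assms by simp
  then show ?thesis unfolding balance_def[abs_def] by (auto intro!: derivative_eq_intros)
qed

lemma balance_continuous: "continuous_on {0..s_in} balance"
  unfolding balance_def[abs_def] by (intro continuous_intros mu_continuous)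

lemma balance_strict_mono: "strict_mono_on {0..s_in} balance"
proof (rule strict_mono_onI)
  fix x y assume "x \<in> {0..s_in}" "y \<in> {0..s_in}" "x < y"
  show "balance x < balance y"
  proof (rule DERIV_pos_imp_increasing_open[OF \<open>x < y\<close>])
    fix z assume "x < z" "z < y"
    then show "\<exists>d. (balance has_real_derivative d) (at z) \<and> 0 < d"
      using balance_deriv_at[of z] G1_gt_mu'[of z] \<open>x \<in> _\<close> \<open>y \<in> _\<close> by auto
  next
    show "continuous_on {x..y} balance"
      by (rule continuous_on_subset[OF balance_continuous]) (use \<open>x \<in> _\<close> \<open>y \<in> _\<close> in auto)
  qed
qed

lemma balance_root_exists:
  assumes "Dbar \<in> {Dmin<..<Dmax}"
  shows "\<exists>r\<in>{0<..<s_in}. balance r = Dbar + G1 * sbar"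
proof -
  have "- (mu s_in - Dbar) < G1 * (s_in - sbar)"
    using G1_gt_slope[OF assms] sbar by (simp add: divide_less_eq)
  then have hi: "Dbar + G1 * sbar < balance s_in" by (simp add: balance_def algebra_simps)
  have lo: "balance 0 < Dbar + G1 * sbar"
    using assms Dmin_pos G1_pos sbar s_min_pos by (simp add: balance_def mu_0 add_pos_nonneg)
  obtain r where "0 \<le> r" "r \<le> s_in" "balance r = Dbar + G1 * sbar"
    using IVT'[of balance 0 "Dbar + G1 * sbar" s_in] lo hi balance_continuous sbar s_min_pos by auto
  moreover have "r \<noteq> 0" "r \<noteq> s_in" using calculation lo hi by auto
  ultimately show ?thesis by auto
qed

lemma Dmin_less_mu_if_level_below:
  assumes "Dbar \<in> {Dmin<..<Dmax}" "x \<in> {0..s_in}" "Dbar - G1 * (x - sbar) \<le> mu x"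
  shows "Dmin < mu x"
proof (cases "s_min \<le> x")
  case True then show ?thesis using Dmin_less_mu assms(2) by simp
next
  case False
  then have "0 < G1 * (sbar - x)" using G1_pos sbar by simp
  then show ?thesis using assms(1,3) by (simp add: algebra_simps)
qed

lemma closed_loop_sol_tendsto_root:
  assumes Dbar: "Dbar \<in> {Dmin<..<Dmax}"
    and r: "r \<in> {0<..<s_in}" "balance r = Dbar + G1 * sbar"
    and sol: "closed_loop_sol s_in mu Dmin Dmax G1 sbar Dbar s b"
  shows "(s \<longlongrightarrow> r) at_top"
proof -
  let ?Df = "dil Dmin Dmax G1 sbar Dbar"
  have level: "mu x - (Dbar - G1 * (x - sbar)) = balance x - balance r" for x
    using r(2) by (simp add: balance_def algebra_simps)
  interpret chemostat_trajectory s_in Dmin Dmax r mu ?Df s b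
  proof
    show "continuous_on {0..s_in} ?Df" using Dmin_pos Dmin_less_Dmax
      by (simp add: dil_def[abs_def] sat_eq_max_min) (intro continuous_intros)
    show "Dmin \<le> ?Df x" "?Df x \<le> Dmax" for x
      using Dmin_pos Dmin_less_Dmax by (auto simp: dil_def sat_def)
    show "mu x < ?Df x" if "0 \<le> x" "x < r" for x
    proof -
      have "balance x < balance r"
        using strict_mono_onD[OF balance_strict_mono] that r(1) by auto
      then show ?thesis
        unfolding dil_def using level[of x] mu_less_Dmax[of x] that r(1) by (intro less_sat) auto
    qed
    show "?Df x < mu x" if "r < x" "x \<le> s_in" for x
    proof -
      have "balance r < balance x"
        using strict_mono_onD[OF balance_strict_mono] that r(1) by auto
      then show ?thesis
        unfolding dil_def using level[of x] Dmin_less_mu_if_level_below[OF Dbar, of x] that r(1)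
        by (intro sat_less) auto
    qed
  qed (use Dmin_pos Dmin_less_Dmax mu_continuous mu_0 mu_nonneg r(1) sol in \<open>auto simp: closed_loop_sol_def\<close>)
  show ?thesis by (rule s_tendsto_sstar)
qed

lemma s_eq_eq_root:
  assumes Dbar: "Dbar \<in> {Dmin<..<Dmax}"
    and r: "r \<in> {0<..<s_in}" "balance r = Dbar + G1 * sbar"
  shows "s_eq s_in mu Dmin Dmax G1 sbar Dbar = r"
proof (rule s_eq_eqI[where c = "s_in - r"])
  show "(s \<longlongrightarrow> r) at_top" if "closed_loop_sol s_in mu Dmin Dmax G1 sbar Dbar s b" for s b
    by (rule closed_loop_sol_tendsto_root[OF Dbar r that])
  have level: "mu r = Dbar - G1 * (r - sbar)" using r(2) by (simp add: balance_def algebra_simps)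
  then have "Dmin < mu r" using Dmin_less_mu_if_level_below[OF Dbar, of r] r(1) by simp
  moreover have "mu r < Dmax" using mu_less_Dmax[of r] r(1) by simp
  ultimately have "mu r = dil Dmin Dmax G1 sbar Dbar r" using level by (simp add: dil_def sat_eq_self)
  then show "closed_loop_sol s_in mu Dmin Dmax G1 sbar Dbar (\<lambda>_. r) (\<lambda>_. s_in - r)"
    using r(1) by (intro closed_loop_sol_const) auto
qed

lemma s_eq_balance:
  assumes "Dbar \<in> {Dmin<..<Dmax}"
  shows "s_eq s_in mu Dmin Dmax G1 sbar Dbar \<in> {0<..<s_in}
    \<and> balance (s_eq s_in mu Dmin Dmax G1 sbar Dbar) = Dbar + G1 * sbar"
proof -
  obtain r where "r \<in> {0<..<s_in}" "balance r = Dbar + G1 * sbar"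
    using balance_root_exists[OF assms] by blast
  with s_eq_eq_root[OF assms this] show ?thesis by simp
qed

lemma s_eq_has_derivative:
  assumes Dbar: "Dbar \<in> {Dmin<..<Dmax}"
  shows "((\<lambda>D. s_eq s_in mu Dmin Dmax G1 sbar D) has_real_derivative
    1 / (G1 + mu' (s_eq s_in mu Dmin Dmax G1 sbar Dbar))) (at Dbar)"
proof -
  define r where "r = s_eq s_in mu Dmin Dmax G1 sbar Dbar"
  define f where "f x = balance x - G1 * sbar" for x
  define S where "S = {0<..<s_in} \<inter> f -` {Dmin<..<Dmax}"
  have r: "r \<in> {0<..<s_in}" "f r = Dbar" using s_eq_balance[OF Dbar] by (auto simp: r_def f_def)
  have cont: "continuous_on {0<..<s_in} f" unfolding f_def[abs_def]
    by (intro continuous_intros continuous_on_subset[OF balance_continuous]) auto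
  have "open S" unfolding S_def by (rule continuous_open_preimage[OF cont]) auto
  have deriv: "(f has_real_derivative mu' r + G1) (at r)"
    unfolding f_def[abs_def] using balance_deriv_at[OF r(1)] by (auto intro!: derivative_eq_intros)
  have "mu' r + G1 \<noteq> 0" using G1_gt_mu'[of r] r(1) by simp
  have "r \<in> S" using r Dbar by (simp add: S_def)
  have "continuous_on S f" using cont by (rule continuous_on_subset) (simp add: S_def)
  have inverse: "s_eq s_in mu Dmin Dmax G1 sbar (f z) = z" if "z \<in> S" for z
  proof (rule s_eq_eq_root)
    show "f z \<in> {Dmin<..<Dmax}" "z \<in> {0<..<s_in}" using that by (simp_all add: S_def)
    show "balance z = f z + G1 * sbar" by (simp add: f_def)
  qed
  have "((\<lambda>D. s_eq s_in mu Dmin Dmax G1 sbar D) has_real_derivative inverse (mu' r + G1)) (at (f r))"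
    by (rule has_field_derivative_inverse_strong[OF deriv \<open>mu' r + G1 \<noteq> 0\<close> \<open>open S\<close> \<open>r \<in> S\<close>
        \<open>continuous_on S f\<close> inverse])
  then show ?thesis using r(2) by (simp add: r_def inverse_eq_divide add.commute)
qed

end

theorem mainTheorem3:
  fixes s_in s_min Dmin Dmax G1 sbar :: real
    and mu mu' :: "real \<Rightarrow> real"
  assumes s_in_pos: "s_in > 0"
    and s_min: "0 < s_min" "s_min < s_in"
    and Dminmax: "0 < Dmin" "Dmin < Dmax"
    and G1_pos: "G1 > 0"
    and sbar: "sbar \<in> {s_min..<s_in}"
    and mu_deriv: "\<And>s. s \<in> {0..s_in} \<Longrightarrow> (mu has_real_derivative mu' s) (at s within {0..s_in})"
    and mu'_cont: "continuous_on {0..s_in} mu'"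
    and mu_nonneg: "\<And>s. s \<in> {0..s_in} \<Longrightarrow> mu s \<ge> 0"
    and mu0: "mu 0 = 0"
    and mu_pos: "\<And>s. s \<in> {0<..s_in} \<Longrightarrow> mu s > 0"
    and Dmin_lt: "\<And>s. s \<in> {s_min..s_in} \<Longrightarrow> Dmin < mu s"
    and Dmax_gt: "\<And>s. s \<in> {0..s_in} \<Longrightarrow> mu s < Dmax"
    and G1_mu': "\<And>s. s \<in> {0..s_in} \<Longrightarrow> G1 > - mu' s"
    and G1_Dbar: "\<And>Dbar. Dbar \<in> {Dmin<..<Dmax} \<Longrightarrow> G1 > - (mu s_in - Dbar) / (s_in - sbar)"
  shows "\<forall>Dbar \<in> {Dmin<..<Dmax}.
           mu (s_eq s_in mu Dmin Dmax G1 sbar Dbar) = Dbar - G1 * (s_eq s_in mu Dmin Dmax G1 sbar Dbar - sbar)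
         \<and> ((\<lambda>D. s_eq s_in mu Dmin Dmax G1 sbar D) has_real_derivative
              1 / (G1 + mu' (s_eq s_in mu Dmin Dmax G1 sbar Dbar))) (at Dbar)"
proof
  interpret feedback_chemostat s_in s_min Dmin Dmax G1 sbar mu mu'
    by unfold_locales (fact assms)+
  fix Dbar assume Dbar: "Dbar \<in> {Dmin<..<Dmax}"
  have "mu (s_eq s_in mu Dmin Dmax G1 sbar Dbar) = Dbar - G1 * (s_eq s_in mu Dmin Dmax G1 sbar Dbar - sbar)"
    using s_eq_balance[OF Dbar] by (simp add: balance_def algebra_simps)
  with s_eq_has_derivative[OF Dbar] show "mu (s_eq s_in mu Dmin Dmax G1 sbar Dbar) =
      Dbar - G1 * (s_eq s_in mu Dmin Dmax G1 sbar Dbar - sbar)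
    \<and> ((\<lambda>D. s_eq s_in mu Dmin Dmax G1 sbar D) has_real_derivative
      1 / (G1 + mu' (s_eq s_in mu Dmin Dmax G1 sbar Dbar))) (at Dbar)" by blast
qed

end
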